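(* Let $E$ and $E'$ be disjunctive interval multiplicity expressions (DIMEs) over a finite alphabet $\Sigma$. Then $L(E)=L(E')$ if and only if $\Delta_E=\Delta_{E'}$.
   Context: Unordered words are functions $w:\Sigma\to\mathbb{N}_0$; $a\in w$ means $w(a)\neq 0$; $\varepsilon$ is the all-zero word; unordered concatenation $\uplus$ is multiset union, extended to languages pointwise. An interval is $[n,m]$ or $[n,m]^?$ with $n\in\mathbb{N}_0$, $m\in\mathbb{N}_0\cup\{\infty\}$; $L(E^{[n,m]})=\{w_1\uplus\dots\uplus w_i\mid n\le i\le m, w_j\in L(E)\}$, $L(E^{[n,m]^?})=L(E^{[n,m]})\cup\{\varepsilon\}$; the multiplicities $*,+,?,1$ denote $[0,\infty],[1,\infty],[0,1],[1,1]$. Also $L(a)=\{a\}$, $L(E_1\mid E_2)=L(E_1)\cup L(E_2)$, $L(E_1\mathbin{|\hspace{-0.1em}|} E_2)=L(E_1)\uplus L(E_2)$. An atom is $(a_1^{I_1}\mathbin{|\hspace{-0.1em}|}\dots\mathbin{|\hspace{-0.1em}|} a_k^{I_k})$ with $a_i\in\Sigma$ and each $I_i\in\{?,1\}$. A clause is $(A_1^{I_1}\mid\dots\mid A_k^{I_k})$ with atoms $A_i$ and intervals $I_i$; it is simple if each $I_i\in\{?,1\}$. A DIME is $(D_1^{I_1}\mathbin{|\hspace{-0.1em}|}\dots\mathbin{|\hspace{-0.1em}|} D_k^{I_k})$ where for each $i$ either $D_i$ is a simple clause and $I_i\in\{+,*\}$, or $D_i$ is a clause and $I_i\in\{1,?\}$;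 moreover each symbol occurs at most once in the DIME. The characterizing tuple of a DIME $E$ is $\Delta_E=(C_E,N_E,P_E,K_E)$ where $C_E=\{(a,b)\in\Sigma\times\Sigma\mid \neg\exists w\in L(E).\ a\in w\wedge b\in w\}$, $N_E=\{(a,w(a))\mid a\in\Sigma, w\in L(E)\}$, $P_E=\{X\subseteq\Sigma\mid\forall w\in L(E).\ \exists a\in X.\ a\in w\}$, $K_E=\{(a,b)\in\Sigma\times\Sigma\mid\forall w\in L(E).\ w(a)\ge w(b)\}$. *)

theory Defs
  imports Main "HOL-Library.Extended_Nat"
begin

text \<open>Unordered words over a finite alphabet (the finite type 'a) are functions 'a => nat.\<close>
type_synonym 'a uword = "'a \<Rightarrow> nat"

definition eps :: "'a uword" where "eps = (\<lambda>_. 0)"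

definition uconc :: "'a uword \<Rightarrow> 'a uword \<Rightarrow> 'a uword" where
  "uconc u v = (\<lambda>a. u a + v a)"

definition lconc :: "'a uword set \<Rightarrow> 'a uword set \<Rightarrow> 'a uword set" where
  "lconc L1 L2 = {uconc u v | u v. u \<in> L1 \<and> v \<in> L2}"

fun lpow :: "'a uword set \<Rightarrow> nat \<Rightarrow> 'a uword set" where
  "lpow L 0 = {eps}"
| "lpow L (Suc i) = lconc L (lpow L i)"

text \<open>An interval: (n, m, opt) stands for [n,m] if opt is False and [n,m]^? if opt is True;
  m = \<infinity> is allowed.\<close>
type_synonym interval = "nat \<times> enat \<times> bool"

definition valid_interval :: "interval \<Rightarrow> bool" where
  "valid_interval I = (case I of (n, m, _) \<Rightarrow> enat n \<le> m)"

definition I_star :: interval where "I_star = (0, \<infinity>, False)"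
definition I_plus :: interval where "I_plus = (1, \<infinity>, False)"
definition I_opt :: interval where "I_opt = (0, 1, False)"
definition I_one :: interval where "I_one = (1, 1, False)"

datatype 'a expr =
    Sym 'a
  | Disj "'a expr list"
  | UConc "'a expr list"
  | Mult "'a expr" interval

fun lang :: "'a expr \<Rightarrow> 'a uword set" where
  "lang (Sym a) = {(\<lambda>b. if b = a then 1 else 0)}"
| "lang (Disj es) = (\<Union>e\<in>set es. lang e)"
| "lang (UConc es) = foldr (\<lambda>e L. lconc (lang e) L) es {eps}"
| "lang (Mult e (n, m, opt)) =
     (\<Union>{lpow (lang e) i | i. n \<le> i \<and> enat i \<le> m}) \<union> (if opt then {eps} else {})"

fun syms :: "'a expr \<Rightarrow> 'a list" where
  "syms (Sym a) = [a]"
| "syms (Disj es) = concat (map syms es)"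
| "syms (UConc es) = concat (map syms es)"
| "syms (Mult e I) = syms e"

definition is_atom :: "'a expr \<Rightarrow> bool" where
  "is_atom e = (\<exists>xs. e = UConc xs \<and> xs \<noteq> [] \<and>
      (\<forall>x\<in>set xs. \<exists>a I. x = Mult (Sym a) I \<and> I \<in> {I_opt, I_one}))"

definition is_clause :: "'a expr \<Rightarrow> bool" where
  "is_clause e = (\<exists>ys. e = Disj ys \<and> ys \<noteq> [] \<and>
      (\<forall>y\<in>set ys. \<exists>A I. y = Mult A I \<and> is_atom A \<and> valid_interval I))"

definition is_simple_clause :: "'a expr \<Rightarrow> bool" where
  "is_simple_clause e = (\<exists>ys. e = Disj ys \<and> ys \<noteq> [] \<and>
      (\<forall>y\<in>set ys. \<exists>A I. y = Mult A I \<and> is_atom A \<and> I \<in> {I_opt, I_one}))"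

definition is_DIME :: "'a expr \<Rightarrow> bool" where
  "is_DIME e = ((\<exists>zs. e = UConc zs \<and> zs \<noteq> [] \<and>
      (\<forall>z\<in>set zs. \<exists>D I. z = Mult D I \<and>
          ((is_simple_clause D \<and> I \<in> {I_plus, I_star}) \<or> (is_clause D \<and> I \<in> {I_one, I_opt}))))
     \<and> distinct (syms e))"

text \<open>Characterizing tuple (C_E, N_E, P_E, K_E); the alphabet is UNIV.\<close>
definition C_of :: "'a expr \<Rightarrow> ('a \<times> 'a) set" where
  "C_of E = {(a, b). \<not> (\<exists>w\<in>lang E. w a \<noteq> 0 \<and> w b \<noteq> 0)}"

definition N_of :: "'a expr \<Rightarrow> ('a \<times> nat) set" where
  "N_of E = {(a, w a) | a w. w \<in> lang E}"

definition P_of :: "'a expr \<Rightarrow> 'a set set" where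
  "P_of E = {X. \<forall>w\<in>lang E. \<exists>a\<in>X. w a \<noteq> 0}"

definition K_of :: "'a expr \<Rightarrow> ('a \<times> 'a) set" where
  "K_of E = {(a, b). \<forall>w\<in>lang E. w a \<ge> w b}"

definition Delta :: "'a expr \<Rightarrow> ('a \<times> 'a) set \<times> ('a \<times> nat) set \<times> 'a set set \<times> ('a \<times> 'a) set" where
  "Delta E = (C_of E, N_of E, P_of E, K_of E)"

end

theory Submission
  imports Defs
begin

text \<open>A word \<open>w\<close> conforms to a language \<open>L\<close> if it meets the four constraints recorded by
  the characterizing tuple of \<open>L\<close>: any two letters of \<open>w\<close> co-occur in a word of \<open>L\<close>, each letter
  count of \<open>w\<close> is a letter count in \<open>L\<close>, \<open>w\<close> meets every set of letters met by all words of \<open>L\<close>,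
  and \<open>w\<close> satisfies every inequality \<open>w b \<le> w a\<close> valid on \<open>L\<close>. Conformance to \<open>L(E)\<close> depends
  only on \<open>\<Delta>\<^sub>E\<close>, so it suffices that DIME languages are closed: they contain every conforming word.

  For the powers of an atom, the inequalities force the mandatory letters to share one count
  bounding the optional ones, and the letter counts keep that count in the allowed range; in a
  clause, co-occurrence confines a nonempty conforming word to one disjunct. Closedness survives
  removal of \<open>\<epsilon>\<close> and unordered concatenation over disjoint alphabets, since restricting a conforming
  word to a sub-alphabet gives a word conforming to the restricted language; the star of a simple
  clause is such a concatenation of stars of atoms.\<close>

subsection \<open>Unordered words and languages\<close>

definition letter :: "'a \<Rightarrow> 'a uword" where
  "letter a = (\<lambda>b. if b = a then 1 else 0)"

definition restrict_word :: "'a uword \<Rightarrow> 'a set \<Rightarrow> 'a uword" where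
  "restrict_word w S = (\<lambda>a. if a \<in> S then w a else 0)"

definition supported_in :: "'a uword set \<Rightarrow> 'a set \<Rightarrow> bool" where
  "supported_in L S \<longleftrightarrow> (\<forall>v\<in>L. \<forall>a. v a \<noteq> 0 \<longrightarrow> a \<in> S)"

definition lstar :: "'a uword set \<Rightarrow> 'a uword set" where
  "lstar L = (\<Union>i. lpow L i)"

lemma restrict_word_apply: "restrict_word w S a = (if a \<in> S then w a else 0)"
  by (simp add: restrict_word_def)

lemma eps_apply: "eps a = 0"
  by (simp add: eps_def)

lemma uconc_apply: "uconc u v a = u a + v a"
  by (simp add: uconc_def)

lemma eps_iff: "w = eps \<longleftrightarrow> (\<forall>a. w a = 0)"
  by (auto simp: eps_def)

lemma uconc_eps [simp]: "uconc u eps = u" "uconc eps u = u"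
  by (auto simp: uconc_def eps_def)

lemma uconc_commute: "uconc u v = uconc v u"
  by (auto simp: uconc_def)

lemma uconc_assoc: "uconc (uconc u v) x = uconc u (uconc v x)"
  by (auto simp: uconc_def)

lemma uconc_eq_eps_iff: "uconc u v = eps \<longleftrightarrow> u = eps \<and> v = eps"
  by (auto simp: eps_iff uconc_apply)

lemma lconc_eps [simp]: "lconc L {eps} = L"
  by (auto simp: lconc_def)

lemma lconc_commute: "lconc L1 L2 = lconc L2 L1"
  unfolding lconc_def by (metis uconc_commute)

lemma uconc_in_lconc: "u \<in> L1 \<Longrightarrow> v \<in> L2 \<Longrightarrow> uconc u v \<in> lconc L1 L2"
  by (auto simp: lconc_def)

lemma lpow_mono: "L \<subseteq> L' \<Longrightarrow> lpow L i \<subseteq> lpow L' i"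
  by (induction i) (auto simp: lconc_def)

lemma uconc_in_lpow_add: "u \<in> lpow L i \<Longrightarrow> v \<in> lpow L j \<Longrightarrow> uconc u v \<in> lpow L (i + j)"
proof (induction i arbitrary: u)
  case (Suc i)
  then obtain x y where "u = uconc x y" "x \<in> L" "y \<in> lpow L i"
    by (auto simp: lconc_def)
  with Suc show ?case
    by (auto simp: uconc_assoc intro!: uconc_in_lconc)
qed simp

lemma lpow_in_lstar: "w \<in> lpow L i \<Longrightarrow> w \<in> lstar L"
  by (auto simp: lstar_def)

lemma eps_in_lstar: "eps \<in> lstar L"
  by (auto simp: lstar_def intro: exI[of _ 0])

lemma lstar_empty: "lstar {} = {eps}"
proof -
  have "w = eps" if "w \<in> lpow {} i" for w i
    using that by (cases i) (auto simp: lconc_def)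
  then show ?thesis
    using eps_in_lstar by (auto simp: lstar_def)
qed

lemma uconc_in_lstar:
  assumes "x \<in> L" "y \<in> lstar L"
  shows "uconc x y \<in> lstar L"
proof -
  obtain j where "y \<in> lpow L j"
    using assms(2) by (auto simp: lstar_def)
  with assms(1) have "uconc x y \<in> lpow L (Suc j)"
    by (simp add: uconc_in_lconc)
  then show ?thesis
    by (rule lpow_in_lstar)
qed

lemma lstar_Un: "lstar (L1 \<union> L2) = lconc (lstar L1) (lstar L2)"
proof
  have "lpow (L1 \<union> L2) i \<subseteq> lconc (lstar L1) (lstar L2)" for i
  proof (induction i)
    case 0
    show ?case
      using uconc_in_lconc[OF eps_in_lstar eps_in_lstar] by simp
  next
    case (Suc i)
    show ?case
    proof
      fix w assume "w \<in> lpow (L1 \<union> L2) (Suc i)"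
      then obtain x y1 y2 where w: "w = uconc x (uconc y1 y2)" "x \<in> L1 \<union> L2"
        and y: "y1 \<in> lstar L1" "y2 \<in> lstar L2"
        using Suc by (auto simp: lconc_def)
      show "w \<in> lconc (lstar L1) (lstar L2)"
      proof (cases "x \<in> L1")
        case True
        have "w = uconc (uconc x y1) y2"
          using w(1) by (simp add: uconc_assoc)
        with True y show ?thesis
          by (simp add: uconc_in_lconc uconc_in_lstar)
      next
        case False
        have "w = uconc y1 (uconc x y2)"
          using w(1) by (metis uconc_assoc uconc_commute)
        with False w(2) y show ?thesis
          by (simp add: uconc_in_lconc uconc_in_lstar)
      qed
    qed
  qed
  then show "lstar (L1 \<union> L2) \<subseteq> lconc (lstar L1) (lstar L2)"
    by (auto simp: lstar_def)
next
  show "lconc (lstar L1) (lstar L2) \<subseteq> lstar (L1 \<union> L2)"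
  proof
    fix w assume "w \<in> lconc (lstar L1) (lstar L2)"
    then obtain y1 y2 j1 j2 where "w = uconc y1 y2" "y1 \<in> lpow L1 j1" "y2 \<in> lpow L2 j2"
      by (auto simp: lconc_def lstar_def)
    then have "w \<in> lpow (L1 \<union> L2) (j1 + j2)"
      using lpow_mono[of L1 "L1 \<union> L2"] lpow_mono[of L2 "L1 \<union> L2"]
      by (blast intro: uconc_in_lpow_add)
    then show "w \<in> lstar (L1 \<union> L2)"
      by (rule lpow_in_lstar)
  qed
qed

lemma lstar_insert_eps: "lstar (insert eps L) = lstar L"
proof
  have "lpow (insert eps L) i \<subseteq> lstar L" for i
  proof (induction i)
    case 0
    then show ?case
      using eps_in_lstar by simp
  next
    case (Suc i)
    then show ?case
      by (auto simp: lconc_def intro: uconc_in_lstar)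
  qed
  then show "lstar (insert eps L) \<subseteq> lstar L"
    by (auto simp: lstar_def)
next
  show "lstar L \<subseteq> lstar (insert eps L)"
    using lpow_mono[of L "insert eps L"] by (auto simp: lstar_def)
qed

lemma lstar_eq_lpow_ge_1:
  assumes "eps \<in> L"
  shows "lstar L = {w. \<exists>i. 1 \<le> i \<and> w \<in> lpow L i}"
proof
  show "lstar L \<subseteq> {w. \<exists>i. 1 \<le> i \<and> w \<in> lpow L i}"
  proof
    fix w assume "w \<in> lstar L"
    then obtain i where "w \<in> lpow L i"
      by (auto simp: lstar_def)
    then have "w \<in> lpow L (Suc i)"
      using uconc_in_lconc[OF assms, of w] by simp
    then show "w \<in> {w. \<exists>i. 1 \<le> i \<and> w \<in> lpow L i}"
      by auto
  qed
qed (auto simp: lstar_def)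

lemma lstar_minus_eps_eq_lpow_ge_1:
  assumes "eps \<notin> L"
  shows "lstar L - {eps} = {w. \<exists>i. 1 \<le> i \<and> w \<in> lpow L i}"
proof
  show "lstar L - {eps} \<subseteq> {w. \<exists>i. 1 \<le> i \<and> w \<in> lpow L i}"
  proof
    fix w assume "w \<in> lstar L - {eps}"
    then obtain i where "w \<in> lpow L i" "w \<noteq> eps"
      by (auto simp: lstar_def)
    moreover from this have "1 \<le> i"
      by (cases i) simp_all
    ultimately show "w \<in> {w. \<exists>i. 1 \<le> i \<and> w \<in> lpow L i}"
      by blast
  qed
next
  show "{w. \<exists>i. 1 \<le> i \<and> w \<in> lpow L i} \<subseteq> lstar L - {eps}"
  proof
    fix w assume "w \<in> {w. \<exists>i. 1 \<le> i \<and> w \<in> lpow L i}"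
    then obtain i where "1 \<le> i" "w \<in> lpow L i"
      by blast
    then obtain j where w: "w \<in> lpow L (Suc j)"
      by (cases i) simp_all
    then obtain x y where "w = uconc x y" "x \<in> L"
      by (auto simp: lconc_def)
    then have "w \<noteq> eps"
      using assms by (auto simp: uconc_eq_eps_iff)
    with w show "w \<in> lstar L - {eps}"
      using lpow_in_lstar by blast
  qed
qed

lemma supported_in_lconc:
  "supported_in L1 S1 \<Longrightarrow> supported_in L2 S2 \<Longrightarrow> supported_in (lconc L1 L2) (S1 \<union> S2)"
  by (auto simp: supported_in_def lconc_def uconc_apply)

lemma supported_in_lstar: "supported_in L S \<Longrightarrow> supported_in (lstar L) S"
proof -
  assume "supported_in L S"
  then have "supported_in (lpow L i) S" for i
    by (induction i) (auto simp: supported_in_def lconc_def uconc_apply eps_apply)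
  then show ?thesis
    by (auto simp: supported_in_def lstar_def)
qed

subsection \<open>Languages of expressions\<close>

lemma lang_Mult:
  "lang (Mult e (n, m, opt)) =
     {w. \<exists>i. n \<le> i \<and> enat i \<le> m \<and> w \<in> lpow (lang e) i} \<union> (if opt then {eps} else {})"
  by auto

lemma enat_le_one_iff: "enat i \<le> 1 \<longleftrightarrow> i = 0 \<or> i = 1"
  by (auto simp: one_enat_def)

lemma lang_Mult_I_one: "lang (Mult e I_one) = lang e"
  unfolding I_one_def lang_Mult by (auto simp: enat_le_one_iff intro: exI[of _ 1])

lemma lang_Mult_I_opt: "lang (Mult e I_opt) = insert eps (lang e)"
  unfolding I_opt_def lang_Mult by (auto simp: enat_le_one_iff intro: exI[of _ 0] exI[of _ 1])

lemma lang_Mult_I_star: "lang (Mult e I_star) = lstar (lang e)"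
  by (auto simp: I_star_def lstar_def)

lemma lang_Mult_I_plus:
  "lang (Mult e I_plus) = (if eps \<in> lang e then lstar (lang e) else lstar (lang e) - {eps})"
  unfolding I_plus_def lang_Mult by (simp add: lstar_eq_lpow_ge_1 lstar_minus_eps_eq_lpow_ge_1)

lemma supported_in_lang: "supported_in (lang e) (set (syms e))"
proof (induction e)
  case (UConc es)
  then show ?case
  proof (induction es)
    case (Cons e es)
    then have "supported_in (lconc (lang e) (lang (UConc es))) (set (syms e) \<union> set (syms (UConc es)))"
      by (intro supported_in_lconc) auto
    then show ?case
      by simp
  qed (simp add: supported_in_def eps_apply)
next
  case (Mult e I)
  then show ?case
    using supported_in_lstar[OF Mult]
    by (cases I) (auto simp: supported_in_def lstar_def eps_apply)
qed (auto simp: supported_in_def)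

lemma lang_Disj_confined:
  assumes "distinct (concat (map syms ys))" "y \<in> set ys"
    and "v \<in> lang (Disj ys)" "v b \<noteq> 0" "b \<in> set (syms y)"
  shows "v \<in> lang y"
proof -
  obtain y' where y': "y' \<in> set ys" "v \<in> lang y'"
    using assms(3) by auto
  then have "b \<in> set (syms y')"
    using supported_in_lang[of y'] assms(4) by (auto simp: supported_in_def)
  with assms(1,2,5) y' have "y' = y"
    by (induction ys) auto
  with y' show ?thesis by simp
qed

subsection \<open>Atoms\<close>

definition atom_pow :: "'a set \<Rightarrow> 'a set \<Rightarrow> nat \<Rightarrow> 'a uword set" where
  "atom_pow M Opt i =
     {w. (\<forall>a\<in>M. w a = i) \<and> (\<forall>a\<in>Opt. w a \<le> i) \<and> (\<forall>a. a \<notin> M \<union> Opt \<longrightarrow> w a = 0)}"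

lemma lconc_letter_atom_pow:
  assumes "a \<notin> M \<union> Opt"
  shows "lconc {letter a} (atom_pow M Opt 1) = atom_pow (insert a M) Opt 1"
proof
  show "lconc {letter a} (atom_pow M Opt 1) \<subseteq> atom_pow (insert a M) Opt 1"
    using assms by (auto simp: lconc_def atom_pow_def letter_def uconc_apply)
  show "atom_pow (insert a M) Opt 1 \<subseteq> lconc {letter a} (atom_pow M Opt 1)"
  proof
    fix w assume w: "w \<in> atom_pow (insert a M) Opt 1"
    define v where "v = w(a := 0)"
    have "w = uconc (letter a) v"
      using w by (auto simp: v_def atom_pow_def letter_def uconc_def)
    moreover have "v \<in> atom_pow M Opt 1"
      using w assms by (auto simp: v_def atom_pow_def)
    ultimately show "w \<in> lconc {letter a} (atom_pow M Opt 1)"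
      by (simp add: uconc_in_lconc)
  qed
qed

lemma lconc_opt_letter_atom_pow:
  assumes "a \<notin> M \<union> Opt"
  shows "lconc {eps, letter a} (atom_pow M Opt 1) = atom_pow M (insert a Opt) 1"
proof
  show "lconc {eps, letter a} (atom_pow M Opt 1) \<subseteq> atom_pow M (insert a Opt) 1"
    using assms by (auto simp: lconc_def atom_pow_def letter_def uconc_apply eps_apply)
  show "atom_pow M (insert a Opt) 1 \<subseteq> lconc {eps, letter a} (atom_pow M Opt 1)"
  proof
    fix w assume w: "w \<in> atom_pow M (insert a Opt) 1"
    define u where "u = (if w a = 0 then eps else letter a)"
    define v where "v = w(a := 0)"
    have "w a \<le> 1"
      using w by (simp add: atom_pow_def)
    then have "w = uconc u v"
      by (auto simp: u_def v_def uconc_def letter_def eps_def fun_eq_iff)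
    moreover have "u \<in> {eps, letter a}" "v \<in> atom_pow M Opt 1"
      using w assms by (auto simp: u_def v_def atom_pow_def)
    ultimately show "w \<in> lconc {eps, letter a} (atom_pow M Opt 1)"
      by (simp add: uconc_in_lconc)
  qed
qed

lemma lang_atom:
  assumes "is_atom A" "distinct (syms A)"
  obtains M Opt where "M \<union> Opt = set (syms A)" "lang A = atom_pow M Opt 1"
proof -
  obtain xs where A: "A = UConc xs"
    and xs: "\<forall>x\<in>set xs. \<exists>a I. x = Mult (Sym a) I \<and> I \<in> {I_opt, I_one}"
    using assms(1) by (auto simp: is_atom_def)
  have "\<exists>M Opt. M \<union> Opt = set (syms (UConc xs)) \<and> lang (UConc xs) = atom_pow M Opt 1"
    using xs assms(2) unfolding A
  proof (induction xs)
    case Nil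
    have "atom_pow {} {} 1 = {eps}"
      by (auto simp: atom_pow_def eps_iff eps_apply)
    then show ?case by auto
  next
    case (Cons x xs)
    obtain a I where x: "x = Mult (Sym a) I" "I \<in> {I_opt, I_one}"
      using Cons.prems by auto
    obtain M Opt where MO: "M \<union> Opt = set (syms (UConc xs))" "lang (UConc xs) = atom_pow M Opt 1"
      using Cons by auto
    have a: "a \<notin> M \<union> Opt"
      using Cons.prems x MO by auto
    show ?case
    proof (cases "I = I_one")
      case True
      then have "lang (UConc (x # xs)) = lconc {letter a} (atom_pow M Opt 1)"
        using x MO by (simp add: lang_Mult_I_one letter_def)
      also have "\<dots> = atom_pow (insert a M) Opt 1"
        by (rule lconc_letter_atom_pow[OF a])
      moreover have "insert a M \<union> Opt = set (syms (UConc (x # xs)))"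
        using MO x by auto
      ultimately show ?thesis
        by blast
    next
      case False
      then have "lang (UConc (x # xs)) = lconc {eps, letter a} (atom_pow M Opt 1)"
        using x MO by (simp add: lang_Mult_I_opt letter_def)
      also have "\<dots> = atom_pow M (insert a Opt) 1"
        by (rule lconc_opt_letter_atom_pow[OF a])
      moreover have "M \<union> insert a Opt = set (syms (UConc (x # xs)))"
        using MO x by auto
      ultimately show ?thesis
        by blast
    qed
  qed
  then show ?thesis
    using that A by blast
qed

lemma lpow_atom_pow: "lpow (atom_pow M Opt 1) i = atom_pow M Opt i"
proof (induction i)
  case 0
  have "w = eps" if "w \<in> atom_pow M Opt 0" for w
  proof -
    have "w a = 0" for a
      using that by (cases "a \<in> M"; cases "a \<in> Opt") (auto simp: atom_pow_def)
    then show ?thesis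
      by (simp add: eps_iff)
  qed
  then show ?case
    by (auto simp: atom_pow_def eps_apply)
next
  case (Suc i)
  have "atom_pow M Opt (Suc i) \<subseteq> lconc (atom_pow M Opt 1) (atom_pow M Opt i)"
  proof
    fix w assume w: "w \<in> atom_pow M Opt (Suc i)"
    define v where "v b = (if b \<in> M then 1 else if b \<in> Opt then min 1 (w b) else 0)" for b
    define u where "u b = w b - v b" for b
    have "w = uconc v u"
      using w by (auto simp: u_def v_def atom_pow_def uconc_def)
    moreover have "v \<in> atom_pow M Opt 1" "u \<in> atom_pow M Opt i"
      using w by (auto simp: u_def v_def atom_pow_def)
    ultimately show "w \<in> lconc (atom_pow M Opt 1) (atom_pow M Opt i)"
      by (simp add: uconc_in_lconc)
  qed
  moreover have "lconc (atom_pow M Opt 1) (atom_pow M Opt i) \<subseteq> atom_pow M Opt (Suc i)"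
  proof
    fix w assume "w \<in> lconc (atom_pow M Opt 1) (atom_pow M Opt i)"
    then obtain u v where w: "w = uconc u v" and uv: "u \<in> atom_pow M Opt 1" "v \<in> atom_pow M Opt i"
      by (auto simp: lconc_def)
    have "u a + v a \<le> Suc i" if "a \<in> Opt" for a
      using uv that add_le_mono[of "u a" 1 "v a" i] by (simp add: atom_pow_def)
    with w uv show "w \<in> atom_pow M Opt (Suc i)"
      by (simp add: atom_pow_def uconc_apply)
  qed
  ultimately show ?case
    using Suc by simp
qed

lemma lang_Mult_atom:
  "lang A = atom_pow M Opt 1 \<Longrightarrow> lang (Mult A (n, m, opt)) =
     {w. \<exists>i. n \<le> i \<and> enat i \<le> m \<and> w \<in> atom_pow M Opt i} \<union> (if opt then {eps} else {})"
  by (simp only: lang_Mult lpow_atom_pow)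

subsection \<open>Conforming words and closed languages\<close>

definition conforms :: "'a uword set \<Rightarrow> 'a uword \<Rightarrow> bool" where
  "conforms L w \<longleftrightarrow>
     (\<forall>a b. w a \<noteq> 0 \<longrightarrow> w b \<noteq> 0 \<longrightarrow> (\<exists>v\<in>L. v a \<noteq> 0 \<and> v b \<noteq> 0)) \<and>
     (\<forall>a. \<exists>v\<in>L. v a = w a) \<and>
     (\<forall>X. (\<forall>v\<in>L. \<exists>a\<in>X. v a \<noteq> 0) \<longrightarrow> (\<exists>a\<in>X. w a \<noteq> 0)) \<and>
     (\<forall>a b. (\<forall>v\<in>L. v b \<le> v a) \<longrightarrow> w b \<le> w a)"

definition char_closed :: "'a uword set \<Rightarrow> bool" where
  "char_closed L \<longleftrightarrow> (\<forall>w. conforms L w \<longrightarrow> w \<in> L)"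

lemma conformsI:
  assumes "\<And>a b. w a \<noteq> 0 \<Longrightarrow> w b \<noteq> 0 \<Longrightarrow> \<exists>v\<in>L. v a \<noteq> 0 \<and> v b \<noteq> 0"
    and "\<And>a. \<exists>v\<in>L. v a = w a"
    and "\<And>X. \<forall>v\<in>L. \<exists>a\<in>X. v a \<noteq> 0 \<Longrightarrow> \<exists>a\<in>X. w a \<noteq> 0"
    and "\<And>a b. \<forall>v\<in>L. v b \<le> v a \<Longrightarrow> w b \<le> w a"
  shows "conforms L w"
  unfolding conforms_def using assms by blast

lemma conformsD_C: "conforms L w \<Longrightarrow> w a \<noteq> 0 \<Longrightarrow> w b \<noteq> 0 \<Longrightarrow> \<exists>v\<in>L. v a \<noteq> 0 \<and> v b \<noteq> 0"
  by (simp add: conforms_def)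

lemma conformsD_N: "conforms L w \<Longrightarrow> \<exists>v\<in>L. v a = w a"
  by (simp add: conforms_def)

lemma conformsD_P: "conforms L w \<Longrightarrow> \<forall>v\<in>L. \<exists>a\<in>X. v a \<noteq> 0 \<Longrightarrow> \<exists>a\<in>X. w a \<noteq> 0"
  by (simp add: conforms_def)

lemma conformsD_K: "conforms L w \<Longrightarrow> \<forall>v\<in>L. v b \<le> v a \<Longrightarrow> w b \<le> w a"
  by (simp add: conforms_def)

lemma conforms_self: "w \<in> L \<Longrightarrow> conforms L w"
  by (auto simp: conforms_def)

lemma conforms_nonempty: "conforms L w \<Longrightarrow> L \<noteq> {}"
  using conformsD_N[of L w undefined] by auto

lemma conforms_supported_in: "conforms L w \<Longrightarrow> supported_in L S \<Longrightarrow> w a \<noteq> 0 \<Longrightarrow> a \<in> S"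
  using conformsD_N[of L w a] by (auto simp: supported_in_def)

lemma conforms_eps:
  assumes "conforms L eps"
  shows "eps \<in> L"
proof (rule ccontr)
  assume "eps \<notin> L"
  then have "\<exists>a. v a \<noteq> 0" if "v \<in> L" for v
    using that eps_iff[of v] by auto
  then have "\<forall>v\<in>L. \<exists>a\<in>UNIV. v a \<noteq> 0"
    by simp
  from conformsD_P[OF assms this] show False
    by (simp add: eps_apply)
qed

lemma conforms_mono:
  assumes w: "conforms L' w" and sub: "L' \<subseteq> L"
  shows "conforms L w"
proof (rule conformsI)
  show "\<exists>v\<in>L. v a \<noteq> 0 \<and> v b \<noteq> 0" if "w a \<noteq> 0" "w b \<noteq> 0" for a b
    using conformsD_C[OF w that] sub by blast
  show "\<exists>v\<in>L. v a = w a" for a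
    using conformsD_N[OF w, of a] sub by blast
  show "\<exists>a\<in>X. w a \<noteq> 0" if "\<forall>v\<in>L. \<exists>a\<in>X. v a \<noteq> 0" for X
    using conformsD_P[OF w, of X] that sub by blast
  show "w b \<le> w a" if "\<forall>v\<in>L. v b \<le> v a" for a b
    using conformsD_K[OF w, of b a] that sub by blast
qed

lemma conforms_restrict_word:
  assumes w: "conforms L w"
  shows "conforms ((\<lambda>v. restrict_word v S) ` L) (restrict_word w S)"
proof (rule conformsI)
  fix a b assume "restrict_word w S a \<noteq> 0" "restrict_word w S b \<noteq> 0"
  then have ab: "a \<in> S" "b \<in> S" "w a \<noteq> 0" "w b \<noteq> 0"
    by (simp_all add: restrict_word_apply split: if_splits)
  then obtain v where "v \<in> L" "v a \<noteq> 0" "v b \<noteq> 0"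
    using conformsD_C[OF w] by blast
  with ab show "\<exists>u\<in>(\<lambda>v. restrict_word v S) ` L. u a \<noteq> 0 \<and> u b \<noteq> 0"
    by (intro bexI[of _ "restrict_word v S"] imageI) (simp_all add: restrict_word_apply)
next
  fix a
  obtain v where v: "v \<in> L" "v a = w a"
    using conformsD_N[OF w] by blast
  then show "\<exists>u\<in>(\<lambda>v. restrict_word v S) ` L. u a = restrict_word w S a"
    by (intro bexI[of _ "restrict_word v S"] imageI) (simp_all add: restrict_word_apply)
next
  fix X assume X: "\<forall>u\<in>(\<lambda>v. restrict_word v S) ` L. \<exists>a\<in>X. u a \<noteq> 0"
  have "\<exists>a\<in>X \<inter> S. v a \<noteq> 0" if v: "v \<in> L" for v
  proof -
    obtain a where "a \<in> X" "restrict_word v S a \<noteq> 0"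
      using bspec[OF X imageI[OF v]] by blast
    then show ?thesis
      by (auto simp: restrict_word_apply split: if_splits)
  qed
  then obtain a where "a \<in> X \<inter> S" "w a \<noteq> 0"
    using conformsD_P[OF w, of "X \<inter> S"] by blast
  then show "\<exists>a\<in>X. restrict_word w S a \<noteq> 0"
    by (auto simp: restrict_word_apply)
next
  fix a b assume le: "\<forall>u\<in>(\<lambda>v. restrict_word v S) ` L. u b \<le> u a"
  have "w b \<le> w a" if "a \<in> S" "b \<in> S"
    using le that conformsD_K[OF w, of b a] by (simp add: restrict_word_apply)
  moreover have "w b = 0" if "a \<notin> S" "b \<in> S"
  proof -
    obtain v where v: "v \<in> L" "v b = w b"
      using conformsD_N[OF w] by blast
    then have "restrict_word v S b \<le> restrict_word v S a"
      using bspec[OF le imageI] by blast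
    with that v show ?thesis
      by (simp add: restrict_word_apply)
  qed
  ultimately show "restrict_word w S b \<le> restrict_word w S a"
    by (auto simp: restrict_word_apply)
qed

lemma char_closed_eps: "char_closed {eps}"
  unfolding char_closed_def
proof (intro allI impI)
  fix w assume "conforms {eps} w"
  then have "w a = 0" for a
    using conformsD_N[of "{eps}" w a] by (auto simp: eps_apply)
  then show "w \<in> {eps}"
    by (simp add: eps_iff)
qed

lemma char_closed_Diff_eps:
  assumes "char_closed L"
  shows "char_closed (L - {eps})"
  unfolding char_closed_def
proof (intro allI impI)
  fix w assume w: "conforms (L - {eps}) w"
  then have "w \<noteq> eps"
    using conforms_eps by blast
  moreover have "conforms L w"
    using w conforms_mono by blast
  ultimately show "w \<in> L - {eps}"
    using assms by (simp add: char_closed_def)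
qed

lemma restrict_word_image_lconc:
  assumes s1: "supported_in L1 S1" and s2: "supported_in L2 S2" and disj: "S1 \<inter> S2 = {}"
    and ne: "L2 \<noteq> {}"
  shows "(\<lambda>v. restrict_word v S1) ` lconc L1 L2 = L1"
proof -
  have restrict: "restrict_word (uconc u v) S1 = u" if "u \<in> L1" "v \<in> L2" for u v
  proof
    fix a
    show "restrict_word (uconc u v) S1 a = u a"
      using that s1 s2 disj by (auto simp: supported_in_def restrict_word_apply uconc_apply)
  qed
  show ?thesis
  proof
    show "(\<lambda>v. restrict_word v S1) ` lconc L1 L2 \<subseteq> L1"
      using restrict by (auto simp: lconc_def)
    show "L1 \<subseteq> (\<lambda>v. restrict_word v S1) ` lconc L1 L2"
    proof
      fix u assume u: "u \<in> L1"
      obtain v where v: "v \<in> L2"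
        using ne by blast
      show "u \<in> (\<lambda>v. restrict_word v S1) ` lconc L1 L2"
        by (rule image_eqI[where f = "\<lambda>v. restrict_word v S1", OF restrict[OF u v, symmetric] uconc_in_lconc[OF u v]])
    qed
  qed
qed

lemma char_closed_lconc:
  assumes c1: "char_closed L1" and c2: "char_closed L2"
    and s1: "supported_in L1 S1" and s2: "supported_in L2 S2" and disj: "S1 \<inter> S2 = {}"
  shows "char_closed (lconc L1 L2)"
  unfolding char_closed_def
proof (intro allI impI)
  fix w assume w: "conforms (lconc L1 L2) w"
  have ne: "L1 \<noteq> {}" "L2 \<noteq> {}"
    using conforms_nonempty[OF w] by (auto simp: lconc_def)
  have "restrict_word w S1 \<in> L1"
    using c1 conforms_restrict_word[OF w, of S1] restrict_word_image_lconc[OF s1 s2 disj ne(2)]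
    by (simp add: char_closed_def)
  moreover have "restrict_word w S2 \<in> L2"
    using c2 conforms_restrict_word[OF w, of S2] restrict_word_image_lconc[OF s2 s1 _ ne(1)] disj
    by (simp add: char_closed_def lconc_commute[of L1] Int_commute)
  ultimately have "uconc (restrict_word w S1) (restrict_word w S2) \<in> lconc L1 L2"
    by (rule uconc_in_lconc)
  moreover have "uconc (restrict_word w S1) (restrict_word w S2) = w"
  proof
    fix a
    show "uconc (restrict_word w S1) (restrict_word w S2) a = w a"
      using conforms_supported_in[OF w supported_in_lconc[OF s1 s2], of a] disj
      by (auto simp: uconc_apply restrict_word_apply)
  qed
  ultimately show "w \<in> lconc L1 L2"
    by simp
qed

subsection \<open>Closedness of DIME languages\<close>

lemma conforms_atom_pow_count:
  assumes L: "\<And>v. v \<in> L \<Longrightarrow>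
      (\<forall>b\<in>M \<union> Opt. v b = 0) \<or> (\<exists>i. n \<le> i \<and> enat i \<le> m \<and> v \<in> atom_pow M Opt i)"
    and w: "conforms L w" and b: "b \<in> M \<union> Opt" "w b \<noteq> 0"
  shows "\<exists>i. n \<le> i \<and> enat i \<le> m \<and> w b \<le> i \<and> (b \<in> M \<longrightarrow> w b = i)"
proof -
  obtain v where v: "v \<in> L" "v b = w b"
    using conformsD_N[OF w] by blast
  with b L[OF v(1)] obtain i where "n \<le> i" "enat i \<le> m" "v \<in> atom_pow M Opt i"
    by auto
  with b v show ?thesis
    by (intro exI[of _ i]) (auto simp: atom_pow_def)
qed

lemma conforms_atom_pow_range:
  fixes w :: "'a::finite uword"
  assumes L: "\<And>v. v \<in> L \<Longrightarrow>
      (\<forall>b\<in>M \<union> Opt. v b = 0) \<or> (\<exists>i. n \<le> i \<and> enat i \<le> m \<and> v \<in> atom_pow M Opt i)"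
    and nm: "enat n \<le> m" and w: "conforms L w"
    and supp: "\<And>b. w b \<noteq> 0 \<Longrightarrow> b \<in> M \<union> Opt" and a0: "w a0 \<noteq> 0"
  shows "\<exists>i. n \<le> i \<and> enat i \<le> m \<and> w \<in> atom_pow M Opt i"
proof -
  note count = conforms_atom_pow_count[OF L w]
  show ?thesis
  proof (cases "M = {}")
    case False
    then obtain c where c: "c \<in> M"
      by blast
    have le: "v a \<le> v c" if "v \<in> L" "a \<in> M \<union> Opt" "c \<in> M" for v a c
      using L[OF that(1)] that(2,3) by (auto simp: atom_pow_def)
    have "w a \<le> w c" if "a \<in> M \<union> Opt" for a
      using conformsD_K[OF w] le that c by blast
    moreover have "w a = w c" if "a \<in> M" for a
      using conformsD_K[OF w] le that c by (meson UnI1 antisym)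
    moreover have "w c \<noteq> 0"
      using calculation(1)[of a0] supp[OF a0] a0 by auto
    then obtain i where "n \<le> i" "enat i \<le> m" "w c = i"
      using count[of c] c by blast
    ultimately show ?thesis
      using supp by (auto simp: atom_pow_def)
  next
    case True
    \<comment> \<open>Without mandatory letters, any count that is at least \<open>n\<close> and every letter count of \<open>w\<close> works.\<close>
    have "Max (range w) \<in> range w"
      by (rule Max_in) auto
    then obtain b where b: "Max (range w) = w b"
      by blast
    have "enat (w b) \<le> m"
    proof (cases "w b = 0")
      case True
      then show ?thesis
        by (simp add: zero_enat_def[symmetric])
    next
      case False
      then obtain i where "enat i \<le> m" "w b \<le> i"
        using count[of b] supp by blast
      then show ?thesis
        by (meson enat_ord_simps(1) order_trans)
    qed
    then have "enat (max n (w b)) \<le> m"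
      using nm by (simp add: max_def)
    moreover have "w a \<le> max n (w b)" for a
    proof -
      have "w a \<le> Max (range w)"
        by (rule Max_ge) auto
      with b show ?thesis
        by simp
    qed
    ultimately show ?thesis
      using True supp by (auto simp: atom_pow_def intro!: exI[of _ "max n (w b)"])
  qed
qed

lemma char_closed_atom_pow_star: "char_closed (\<Union>i. atom_pow M Opt i :: 'a::finite uword set)"
  unfolding char_closed_def
proof (intro allI impI)
  fix w :: "'a uword"
  assume w: "conforms (\<Union>i. atom_pow M Opt i) w"
  show "w \<in> (\<Union>i. atom_pow M Opt i)"
  proof (cases "w = eps")
    case True
    have "eps \<in> atom_pow M Opt 0"
      by (simp add: atom_pow_def eps_apply)
    with True show ?thesis
      by blast
  next
    case False
    then obtain a0 where a0: "w a0 \<noteq> 0"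
      by (auto simp: eps_iff)
    have "supported_in (\<Union>i. atom_pow M Opt i) (M \<union> Opt)"
      by (auto simp: supported_in_def atom_pow_def)
    then have supp: "b \<in> M \<union> Opt" if "w b \<noteq> 0" for b
      using conforms_supported_in[OF w _ that] by blast
    have "(\<forall>b\<in>M \<union> Opt. v b = 0) \<or> (\<exists>i. 0 \<le> i \<and> enat i \<le> \<infinity> \<and> v \<in> atom_pow M Opt i)"
      if "v \<in> (\<Union>i. atom_pow M Opt i)" for v
      using that by auto
    from conforms_atom_pow_range[OF this _ w supp a0] show ?thesis
      by auto
  qed
qed

lemma conforms_Disj_disjunct:
  fixes w :: "'a::finite uword"
  assumes dist: "distinct (concat (map syms ys))" and y0: "y0 \<in> set ys" "y0 = Mult A (n, m, opt)"
    and A: "lang A = atom_pow M Opt 1" "M \<union> Opt = set (syms A)" and nm: "enat n \<le> m"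
    and L: "L \<subseteq> insert eps (lang (Disj ys))" and w: "conforms L w"
    and a0: "w a0 \<noteq> 0" "a0 \<in> M \<union> Opt"
  shows "w \<in> lang y0"
proof -
  have ly0: "lang y0 = {w. \<exists>i. n \<le> i \<and> enat i \<le> m \<and> w \<in> atom_pow M Opt i} \<union> (if opt then {eps} else {})"
    unfolding y0(2) by (rule lang_Mult_atom[OF A(1)])
  have block: "(\<forall>b\<in>M \<union> Opt. v b = 0) \<or> (\<exists>i. n \<le> i \<and> enat i \<le> m \<and> v \<in> atom_pow M Opt i)"
    if v: "v \<in> L" for v
  proof (cases "\<forall>b\<in>M \<union> Opt. v b = 0")
    case False
    then obtain b where b: "b \<in> set (syms y0)" "v b \<noteq> 0"
      using A(2) y0(2) by auto
    then have "v \<noteq> eps"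
      by (auto simp: eps_apply)
    then have "v \<in> lang (Disj ys)"
      using v L by blast
    then have "v \<in> lang y0"
      using lang_Disj_confined[of ys y0 v b] dist y0(1) b by blast
    with \<open>v \<noteq> eps\<close> have "\<exists>i. n \<le> i \<and> enat i \<le> m \<and> v \<in> atom_pow M Opt i"
      using ly0 by (auto split: if_splits)
    then show ?thesis
      by blast
  qed simp
  have "b \<in> M \<union> Opt" if wb: "w b \<noteq> 0" for b
  proof -
    obtain v where v: "v \<in> L" "v a0 \<noteq> 0" "v b \<noteq> 0"
      using conformsD_C[OF w a0(1) wb] by blast
    then obtain i where "v \<in> atom_pow M Opt i"
      using block[OF v(1)] a0(2) v(2) by auto
    with v(3) show ?thesis
      by (auto simp: atom_pow_def)
  qed
  then obtain i where "n \<le> i" "enat i \<le> m" "w \<in> atom_pow M Opt i"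
    using conforms_atom_pow_range[OF block nm w _ a0(1)] by blast
  then show ?thesis
    using ly0 by blast
qed

lemma char_closed_clause:
  fixes D :: "'a::finite expr"
  assumes D: "is_clause D" and dist: "distinct (syms D)"
    and sub: "lang D \<subseteq> L" and sup: "L \<subseteq> insert eps (lang D)"
  shows "char_closed L"
  unfolding char_closed_def
proof (intro allI impI)
  fix w assume w: "conforms L w"
  obtain ys where ys: "D = Disj ys" "\<forall>y\<in>set ys. \<exists>A I. y = Mult A I \<and> is_atom A \<and> valid_interval I"
    using D by (auto simp: is_clause_def)
  have dist_ys: "distinct (concat (map syms ys))"
    using dist ys(1) by simp
  show "w \<in> L"
  proof (cases "w = eps")
    case True
    then show ?thesis
      using conforms_eps w by blast
  next
    case False
    then obtain a0 where a0: "w a0 \<noteq> 0"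
      by (auto simp: eps_iff)
    obtain v0 where v0: "v0 \<in> L" "v0 a0 = w a0"
      using conformsD_N[OF w] by blast
    then have "v0 \<in> lang D"
      using a0 sup by (auto simp: eps_apply)
    then obtain y0 where y0: "y0 \<in> set ys" "v0 \<in> lang y0"
      using ys(1) by auto
    then obtain A I where AI: "y0 = Mult A I" "is_atom A" "valid_interval I"
      using ys(2) by blast
    obtain n m opt where I: "I = (n, m, opt)"
      by (cases I)
    have "distinct (syms y0)"
      using dist_ys y0(1) by (induction ys) auto
    then obtain M Opt where MO: "M \<union> Opt = set (syms A)" "lang A = atom_pow M Opt 1"
      using lang_atom[OF AI(2)] AI(1) by auto
    have "a0 \<in> M \<union> Opt"
      using supported_in_lang[of y0] y0(2) v0(2) a0 MO(1) AI(1) by (auto simp: supported_in_def)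
    then have "w \<in> lang y0"
      using conforms_Disj_disjunct[OF dist_ys y0(1) _ MO(2,1) _ _ w a0] AI I sup ys(1)
      by (auto simp: valid_interval_def)
    then show ?thesis
      using y0(1) ys(1) sub by auto
  qed
qed

lemma char_closed_lstar_simple_clause:
  fixes ys :: "'a::finite expr list"
  assumes "\<forall>y\<in>set ys. \<exists>A I. y = Mult A I \<and> is_atom A \<and> I \<in> {I_opt, I_one}"
    and "distinct (concat (map syms ys))"
  shows "char_closed (lstar (lang (Disj ys)))"
  using assms
proof (induction ys)
  case Nil
  then show ?case
    by (simp add: lstar_empty char_closed_eps)
next
  case (Cons y ys)
  obtain A I where y: "y = Mult A I" "is_atom A" "I \<in> {I_opt, I_one}"
    using Cons.prems(1) by auto
  have "distinct (syms A)"
    using Cons.prems(2) y(1) by auto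
  then obtain M Opt where "M \<union> Opt = set (syms A)" and A: "lang A = atom_pow M Opt 1"
    by (rule lang_atom[OF y(2)])
  have "lstar (lang y) = lstar (lang A)"
    using y(1,3) by (auto simp: lang_Mult_I_one lang_Mult_I_opt lstar_insert_eps)
  also have "\<dots> = (\<Union>i. atom_pow M Opt i)"
    unfolding lstar_def A lpow_atom_pow ..
  finally have "char_closed (lstar (lang y))"
    using char_closed_atom_pow_star by simp
  moreover have "char_closed (lstar (lang (Disj ys)))"
    using Cons by simp
  moreover have "set (syms y) \<inter> set (syms (Disj ys)) = {}"
    using Cons.prems(2) by auto
  ultimately have "char_closed (lconc (lstar (lang y)) (lstar (lang (Disj ys))))"
    by (rule char_closed_lconc[OF _ _ supported_in_lstar[OF supported_in_lang]
          supported_in_lstar[OF supported_in_lang]])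
  then show ?case
    by (simp add: lstar_Un)
qed

lemma char_closed_DIME_factor:
  fixes D :: "'a::finite expr"
  assumes DI: "(is_simple_clause D \<and> I \<in> {I_plus, I_star}) \<or> (is_clause D \<and> I \<in> {I_one, I_opt})"
    and dist: "distinct (syms D)"
  shows "char_closed (lang (Mult D I))"
proof (cases "is_clause D \<and> I \<in> {I_one, I_opt}")
  case True
  then consider "I = I_one" | "I = I_opt"
    by blast
  then show ?thesis
  proof cases
    case 1
    then show ?thesis
      using char_closed_clause[of D "lang D"] True dist by (simp add: lang_Mult_I_one subset_insertI)
  next
    case 2
    then show ?thesis
      using char_closed_clause[of D "insert eps (lang D)"] True dist
      by (simp add: lang_Mult_I_opt subset_insertI)
  qed
next
  case False
  with DI have simple: "is_simple_clause D" "I \<in> {I_plus, I_star}"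
    by blast+
  then obtain ys where "D = Disj ys" "\<forall>y\<in>set ys. \<exists>A I. y = Mult A I \<and> is_atom A \<and> I \<in> {I_opt, I_one}"
    unfolding is_simple_clause_def by blast
  then have star: "char_closed (lstar (lang D))"
    using char_closed_lstar_simple_clause[of ys] dist by simp
  consider "I = I_star" | "I = I_plus"
    using simple(2) by blast
  then show ?thesis
  proof cases
    case 1
    then show ?thesis
      using star by (simp add: lang_Mult_I_star)
  next
    case 2
    then show ?thesis
      using star char_closed_Diff_eps[OF star] by (simp add: lang_Mult_I_plus)
  qed
qed

lemma char_closed_lang_DIME:
  fixes E :: "'a::finite expr"
  assumes "is_DIME E"
  shows "char_closed (lang E)"
proof -
  obtain zs where E: "E = UConc zs"
    and zs: "\<forall>z\<in>set zs. \<exists>D I. z = Mult D I \<and>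
       ((is_simple_clause D \<and> I \<in> {I_plus, I_star}) \<or> (is_clause D \<and> I \<in> {I_one, I_opt}))"
    and dist: "distinct (syms (UConc zs))"
    using assms unfolding is_DIME_def by blast
  from zs dist have "char_closed (lang (UConc zs))"
  proof (induction zs)
    case Nil
    then show ?case
      by (simp add: char_closed_eps)
  next
    case (Cons z zs)
    obtain D I where z: "z = Mult D I"
      "(is_simple_clause D \<and> I \<in> {I_plus, I_star}) \<or> (is_clause D \<and> I \<in> {I_one, I_opt})"
      using Cons.prems(1) by auto
    have "distinct (syms D)"
      using Cons.prems(2) z(1) by simp
    with z have "char_closed (lang z)"
      by (simp add: char_closed_DIME_factor)
    moreover have "char_closed (lang (UConc zs))"
      using Cons by simp
    moreover have "set (syms z) \<inter> set (syms (UConc zs)) = {}"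
      using Cons.prems(2) by auto
    ultimately have "char_closed (lconc (lang z) (lang (UConc zs)))"
      by (rule char_closed_lconc[OF _ _ supported_in_lang supported_in_lang])
    then show ?case
      by simp
  qed
  with E show ?thesis
    by simp
qed

lemma conforms_lang_iff:
  "conforms (lang E) w \<longleftrightarrow>
     (\<forall>a b. w a \<noteq> 0 \<longrightarrow> w b \<noteq> 0 \<longrightarrow> (a, b) \<notin> C_of E) \<and> (\<forall>a. (a, w a) \<in> N_of E) \<and>
     (\<forall>X\<in>P_of E. \<exists>a\<in>X. w a \<noteq> 0) \<and> (\<forall>(a, b)\<in>K_of E. w b \<le> w a)"
proof -
  have N: "(a, n) \<in> N_of E \<longleftrightarrow> (\<exists>v\<in>lang E. v a = n)" for a n
    by (auto simp: N_of_def)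
  show ?thesis
    unfolding conforms_def C_of_def P_of_def K_of_def N by auto
qed

lemma lang_DIME_eq_conforming:
  fixes E :: "'a::finite expr"
  assumes "is_DIME E"
  shows "lang E = {w. conforms (lang E) w}"
  using char_closed_lang_DIME[OF assms] conforms_self by (auto simp: char_closed_def)

theorem corollary1:
  fixes E E' :: "('a::finite) expr"
  assumes "is_DIME E" and "is_DIME E'"
  shows "lang E = lang E' \<longleftrightarrow> Delta E = Delta E'"
proof
  assume "lang E = lang E'"
  then show "Delta E = Delta E'"
    by (simp add: Delta_def C_of_def N_of_def P_of_def K_of_def)
next
  assume "Delta E = Delta E'"
  then have "conforms (lang E) = conforms (lang E')"
    by (simp add: Delta_def conforms_lang_iff fun_eq_iff)
  then show "lang E = lang E'"
    using lang_DIME_eq_conforming[OF assms(1)] lang_DIME_eq_conforming[OF assms(2)] by simp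
qed

end
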